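(* Suppose the geodesic metric space $X$ has the RBP with respect to pieces $\{X_i:i\in I\}$ and constant $M>0$. Let $C\ge 0$, $i\in I$, $x,y\in N_C(X_i)$, and let $\gamma$ be any geodesic from $x$ to $y$. Then $\gamma\subseteq N_{2M+2\max\{M,C\}}(X_i)$. In particular (taking $C=0$) each $X_i$ is $4M$-quasi-convex.
   Context: For $x\in X$ and $r>0$, $B(x;r)=\{z: d(x,z)<r\}$; $N_r(A)=\{z: d(z,A)\le r\}$. Relative bottleneck property (RBP): a geodesic metric space $X$ has the RBP with respect to a collection of subsets ("pieces") $\{X_i:i\in I\}$ and a constant $M>0$ if $X=\bigcup_{i\in I}X_i$ and for all $i\neq j$ in $I$ there is a finite ordered set $I_{i,j}=\{i=i_0,i_1,\dots,i_s=j\}\subseteq I$ and, for each $r\in\{0,\dots,s-1\}$, a point $w_r\in X_{i_r}\cap X_{i_{r+1}}$ such that every path in $X$ from a point of $X_i$ to a point of $X_j$ meets $B(w_r;M)$. A subset $A$ is $k$-quasi-convex if every geodesic with endpoints in $A$ lies in $N_k(A)$. *)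

theory Defs
  imports "HOL-Analysis.Analysis"
begin

text \<open>Closed r-neighbourhood N_r(A) = {z. d(z,A) \<le> r}; d(z,{}) = \<infinity>, so N_r({}) = {}.\<close>
definition nbhd :: "real \<Rightarrow> 'a::metric_space set \<Rightarrow> 'a set" where
  "nbhd r A = {z. A \<noteq> {} \<and> infdist z A \<le> r}"

definition geodesic :: "(real \<Rightarrow> 'a::metric_space) \<Rightarrow> 'a \<Rightarrow> 'a \<Rightarrow> bool" where
  "geodesic \<gamma> x y \<longleftrightarrow> \<gamma> 0 = x \<and> \<gamma> (dist x y) = y \<and>
     (\<forall>s\<in>{0..dist x y}. \<forall>t\<in>{0..dist x y}. dist (\<gamma> s) (\<gamma> t) = \<bar>s - t\<bar>)"

definition geodesic_space :: "'a::metric_space itself \<Rightarrow> bool" where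
  "geodesic_space _ \<longleftrightarrow> (\<forall>x y::'a. \<exists>\<gamma>. geodesic \<gamma> x y)"

definition quasi_convex :: "real \<Rightarrow> 'a::metric_space set \<Rightarrow> bool" where
  "quasi_convex k A \<longleftrightarrow>
     (\<forall>x\<in>A. \<forall>y\<in>A. \<forall>\<gamma>. geodesic \<gamma> x y \<longrightarrow> \<gamma> ` {0..dist x y} \<subseteq> nbhd k A)"

text \<open>Relative bottleneck property of the whole space (type 'a) w.r.t. pieces Xp i, i \<in> I,
  and constant M. The ordered index set I_{i,j} is a distinct list is = [i_0,...,i_s].\<close>
definition RBP :: "'i set \<Rightarrow> ('i \<Rightarrow> 'a::metric_space set) \<Rightarrow> real \<Rightarrow> bool" where
  "RBP I Xp M \<longleftrightarrow> M > 0 \<and> UNIV = (\<Union>i\<in>I. Xp i) \<and>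
     (\<forall>i\<in>I. \<forall>j\<in>I. i \<noteq> j \<longrightarrow>
        (\<exists>is w. is \<noteq> [] \<and> distinct is \<and> set is \<subseteq> I \<and> hd is = i \<and> last is = j \<and>
           (\<forall>r < length is - 1. w r \<in> Xp (is ! r) \<inter> Xp (is ! Suc r) \<and>
              (\<forall>g::real \<Rightarrow> 'a. path g \<and> pathstart g \<in> Xp i \<and> pathfinish g \<in> Xp j \<longrightarrow>
                  (\<exists>t\<in>{0..1}. g t \<in> ball (w r) M)))))"

end

theory Submission
  imports Defs
begin

(*
  Let z = \<gamma>(t) be a point of the geodesic and let X_j be a piece containing z.
  If j = i there is nothing to show.  Otherwise the RBP yields a bottleneck point w \<in> X_i:
  every path from X_i to X_j meets the ball B(w;M).  For p \<in> X_i the path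
  "geodesic from p to x, then \<gamma> from x to z" runs from X_i to X_j, so some point \<gamma>(s\<^sub>1)
  with s\<^sub>1 \<le> t satisfies d(\<gamma>(s\<^sub>1),w) < M + d(x,p); symmetrically some \<gamma>(s\<^sub>2) with s\<^sub>2 \<ge> t
  satisfies d(\<gamma>(s\<^sub>2),w) < M + d(y,q) for q \<in> X_i.  Since z lies between \<gamma>(s\<^sub>1) and
  \<gamma>(s\<^sub>2) on a geodesic, d(z,w) \<le> d(\<gamma>(s\<^sub>1),w) + d(\<gamma>(s\<^sub>2),w).  Taking infima over p, q
  gives d(z,X_i) \<le> 2M + 2C, which is even slightly stronger than the bound 2M + 2 max{M,C}.
*)

lemma geodesic_dist:
  assumes "geodesic \<gamma> x y" "s \<in> {0..dist x y}" "t \<in> {0..dist x y}"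
  shows "dist (\<gamma> s) (\<gamma> t) = \<bar>s - t\<bar>"
  using assms unfolding geodesic_def by blast

lemma geodesic_continuous_on:
  assumes "geodesic \<gamma> x y"
  shows "continuous_on {0..dist x y} \<gamma>"
  unfolding continuous_on_iff
proof (intro ballI allI impI)
  fix s e :: real assume "s \<in> {0..dist x y}" "0 < e"
  then show "\<exists>d>0. \<forall>t\<in>{0..dist x y}. dist t s < d \<longrightarrow> dist (\<gamma> t) (\<gamma> s) < e"
    using geodesic_dist[OF assms] by (intro exI[of _ e]) (auto simp: dist_real_def)
qed

lemma geodesic_reverse:
  assumes "geodesic \<gamma> x y"
  shows "geodesic (\<lambda>u. \<gamma> (dist x y - u)) y x"
  using assms unfolding geodesic_def by (auto simp: dist_commute)

lemma geodesic_initial_path: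
  assumes g: "geodesic \<gamma> x y" and t: "t \<in> {0..dist x y}"
  defines "g \<equiv> \<lambda>u. \<gamma> (u * t)"
  shows "path g" "pathstart g = x" "pathfinish g = \<gamma> t" "path_image g \<subseteq> \<gamma> ` {0..t}"
proof -
  have scale: "(\<lambda>u. u * t) ` {0..1} \<subseteq> {0..t}"
    using t by (auto intro: mult_left_le_one_le)
  also have "{0..t} \<subseteq> {0..dist x y}" using t by auto
  finally show "path g"
    unfolding path_def g_def
    by (intro continuous_on_compose2[OF geodesic_continuous_on[OF g]] continuous_intros)
  show "pathstart g = x" "pathfinish g = \<gamma> t"
    using g unfolding pathstart_def pathfinish_def g_def geodesic_def by simp_all
  show "path_image g \<subseteq> \<gamma> ` {0..t}"
    using scale unfolding path_image_def g_def by auto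
qed

lemma geodesic_point_between:
  assumes g: "geodesic \<gamma> x y" and "0 \<le> s\<^sub>1" "s\<^sub>1 \<le> t" "t \<le> s\<^sub>2" "s\<^sub>2 \<le> dist x y"
  shows "dist (\<gamma> t) w \<le> dist (\<gamma> s\<^sub>1) w + dist (\<gamma> s\<^sub>2) w"
proof -
  have d12: "dist (\<gamma> s\<^sub>1) (\<gamma> s\<^sub>2) = s\<^sub>2 - s\<^sub>1"
    and d1: "dist (\<gamma> t) (\<gamma> s\<^sub>1) = t - s\<^sub>1" and d2: "dist (\<gamma> t) (\<gamma> s\<^sub>2) = s\<^sub>2 - t"
    using assms by (simp_all add: geodesic_dist[OF g])
  have "dist (\<gamma> s\<^sub>1) (\<gamma> s\<^sub>2) \<le> dist (\<gamma> s\<^sub>1) w + dist (\<gamma> s\<^sub>2) w" by (rule dist_triangle2)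
  moreover have "dist (\<gamma> t) w \<le> dist (\<gamma> t) (\<gamma> s\<^sub>1) + dist (\<gamma> s\<^sub>1) w" by (rule dist_triangle)
  moreover have "dist (\<gamma> t) w \<le> dist (\<gamma> t) (\<gamma> s\<^sub>2) + dist (\<gamma> s\<^sub>2) w" by (rule dist_triangle)
  ultimately show ?thesis using d12 d1 d2 by linarith
qed

text \<open>The ball B(w;M) is a bottleneck between A and B if every path from A to B meets it;
  this is exactly the condition attached to each point wr in the RBP.\<close>
definition bottleneck :: "'a::metric_space \<Rightarrow> real \<Rightarrow> 'a set \<Rightarrow> 'a set \<Rightarrow> bool" where
  "bottleneck w M A B \<longleftrightarrow>
     (\<forall>g::real \<Rightarrow> 'a. path g \<and> pathstart g \<in> A \<and> pathfinish g \<in> B \<longrightarrow>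
        (\<exists>t\<in>{0..1}. g t \<in> ball w M))"

text \<open>The first bottleneck point of the chain I(i,j) lies in X(i) itself.\<close>
lemma RBP_bottleneck:
  assumes R: "RBP I Xp M" and "i \<in> I" "j \<in> I" "i \<noteq> j"
  shows "\<exists>w\<in>Xp i. bottleneck w M (Xp i) (Xp j)"
proof -
  obtain "is" w where chain: "is \<noteq> []" "hd is = i" "last is = j"
    and ws: "\<forall>r < length is - 1. w r \<in> Xp (is ! r) \<inter> Xp (is ! Suc r) \<and>
               bottleneck (w r) M (Xp i) (Xp j)"
  proof -
    have "\<forall>i\<in>I. \<forall>j\<in>I. i \<noteq> j \<longrightarrow> (\<exists>is w. is \<noteq> [] \<and> distinct is \<and> set is \<subseteq> I \<and>
            hd is = i \<and> last is = j \<and> (\<forall>r < length is - 1.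
              w r \<in> Xp (is ! r) \<inter> Xp (is ! Suc r) \<and> bottleneck (w r) M (Xp i) (Xp j)))"
      using R unfolding RBP_def bottleneck_def by (elim conjE)
    with assms(2-4) show ?thesis using that by blast
  qed
  have "0 < length is - 1"
    using chain \<open>i \<noteq> j\<close> by (cases "is" rule: list.exhaust) (auto split: if_splits)
  then have "w 0 \<in> Xp (is ! 0)" "bottleneck (w 0) M (Xp i) (Xp j)" using ws by auto
  moreover have "is ! 0 = i" using chain by (simp add: hd_conv_nth)
  ultimately show ?thesis by auto
qed

text \<open>Walking from a point p \<in> A to x and then along the geodesic \<gamma> up to \<gamma>(t) \<in> B, the
  path must pass the bottleneck; hence some \<gamma>(s), s \<le> t, is close to w, where the
  detour to p costs at most d(x,p).\<close>
lemma bottleneck_initial_segment: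
  fixes \<gamma> :: "real \<Rightarrow> 'a::metric_space"
  assumes gs: "geodesic_space TYPE('a)" and g: "geodesic \<gamma> x y"
    and t: "t \<in> {0..dist x y}" and p: "p \<in> A" and z: "\<gamma> t \<in> B"
    and bn: "bottleneck w M A B"
  shows "\<exists>s\<in>{0..t}. dist (\<gamma> s) w < M + dist x p"
proof -
  obtain \<sigma> where \<sigma>: "geodesic \<sigma> p x" using gs unfolding geodesic_space_def by blast
  define g\<^sub>1 where "g\<^sub>1 = (\<lambda>u. \<sigma> (u * dist p x))"
  define g\<^sub>2 where "g\<^sub>2 = (\<lambda>u. \<gamma> (u * t))"
  have "dist p x \<in> {0..dist p x}" by simp
  note seg\<^sub>1 = geodesic_initial_path[OF \<sigma> this, folded g\<^sub>1_def]
  note seg\<^sub>2 = geodesic_initial_path[OF g t, folded g\<^sub>2_def]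
  have joins: "pathfinish g\<^sub>1 = pathstart g\<^sub>2"
    using seg\<^sub>1(3) seg\<^sub>2(2) \<sigma> unfolding geodesic_def by simp
  have "path (g\<^sub>1 +++ g\<^sub>2)" "pathstart (g\<^sub>1 +++ g\<^sub>2) \<in> A" "pathfinish (g\<^sub>1 +++ g\<^sub>2) \<in> B"
    using seg\<^sub>1(1,2) seg\<^sub>2(1,3) joins p z by simp_all
  then obtain u where "u \<in> {0..1}" "(g\<^sub>1 +++ g\<^sub>2) u \<in> ball w M"
    using bn unfolding bottleneck_def by blast
  then have "(g\<^sub>1 +++ g\<^sub>2) u \<in> path_image (g\<^sub>1 +++ g\<^sub>2)" "dist w ((g\<^sub>1 +++ g\<^sub>2) u) < M"
    unfolding path_image_def by auto
  then have "(g\<^sub>1 +++ g\<^sub>2) u \<in> \<sigma> ` {0..dist p x} \<union> \<gamma> ` {0..t}"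
    "dist w ((g\<^sub>1 +++ g\<^sub>2) u) < M"
    using seg\<^sub>1(4) seg\<^sub>2(4) path_image_join[OF joins] by blast+
  then consider (detour) r where "r \<in> {0..dist p x}" "dist w (\<sigma> r) < M"
    | (on_\<gamma>) s where "s \<in> {0..t}" "dist w (\<gamma> s) < M"
    by auto
  then show ?thesis
  proof cases
    case detour
    have "\<sigma> (dist p x) = x" using \<sigma> unfolding geodesic_def by simp
    then have "dist x (\<sigma> r) = dist p x - r"
      using geodesic_dist[OF \<sigma>, of "dist p x" r] detour(1) by (simp add: dist_commute)
    moreover have "dist x w \<le> dist x (\<sigma> r) + dist w (\<sigma> r)"
      by (rule dist_triangle2)
    ultimately have "dist (\<gamma> 0) w < M + dist x p"
      using detour g unfolding geodesic_def by (simp add: dist_commute)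
    then show ?thesis using t by (intro bexI[of _ 0]) auto
  next
    case on_\<gamma>
    then have "dist (\<gamma> s) w < M" by (simp add: dist_commute)
    then have "dist (\<gamma> s) w < M + dist x p" using zero_le_dist[of x p] by linarith
    then show ?thesis using on_\<gamma>(1) by blast
  qed
qed

text \<open>The same argument applied to the reversed geodesic, starting from q \<in> A near y.\<close>
lemma bottleneck_final_segment:
  fixes \<gamma> :: "real \<Rightarrow> 'a::metric_space"
  assumes gs: "geodesic_space TYPE('a)" and g: "geodesic \<gamma> x y"
    and t: "t \<in> {0..dist x y}" and q: "q \<in> A" and z: "\<gamma> t \<in> B"
    and bn: "bottleneck w M A B"
  shows "\<exists>s\<in>{t..dist x y}. dist (\<gamma> s) w < M + dist y q"
proof -
  have "dist x y - t \<in> {0..dist y x}" using t by (auto simp: dist_commute)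
  from bottleneck_initial_segment[OF gs geodesic_reverse[OF g] this q _ bn] z
  obtain s where "s \<in> {0..dist x y - t}" "dist (\<gamma> (dist x y - s)) w < M + dist y q"
    by auto
  then show ?thesis by (intro bexI[of _ "dist x y - s"]) auto
qed

lemma geodesic_through_bottleneck:
  fixes \<gamma> :: "real \<Rightarrow> 'a::metric_space"
  assumes gs: "geodesic_space TYPE('a)" and g: "geodesic \<gamma> x y"
    and t: "t \<in> {0..dist x y}" and "p \<in> A" "q \<in> A" and "\<gamma> t \<in> B"
    and bn: "bottleneck w M A B"
  shows "dist (\<gamma> t) w < 2 * M + dist x p + dist y q"
proof -
  obtain s\<^sub>1 where s\<^sub>1: "s\<^sub>1 \<in> {0..t}" "dist (\<gamma> s\<^sub>1) w < M + dist x p"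
    using bottleneck_initial_segment[OF gs g t \<open>p \<in> A\<close> \<open>\<gamma> t \<in> B\<close> bn] by blast
  obtain s\<^sub>2 where s\<^sub>2: "s\<^sub>2 \<in> {t..dist x y}" "dist (\<gamma> s\<^sub>2) w < M + dist y q"
    using bottleneck_final_segment[OF gs g t \<open>q \<in> A\<close> \<open>\<gamma> t \<in> B\<close> bn] by blast
  have "dist (\<gamma> t) w \<le> dist (\<gamma> s\<^sub>1) w + dist (\<gamma> s\<^sub>2) w"
    using s\<^sub>1 s\<^sub>2 by (intro geodesic_point_between[OF g]) auto
  with s\<^sub>1 s\<^sub>2 show ?thesis by linarith
qed

lemma le_infdist:
  assumes "A \<noteq> {}" "\<And>a. a \<in> A \<Longrightarrow> c \<le> dist x a"
  shows "c \<le> infdist x A"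
  using assms by (simp add: infdist_notempty cINF_greatest)

lemma nbhd_mono: "r \<le> s \<Longrightarrow> nbhd r A \<subseteq> nbhd s A"
  unfolding nbhd_def by auto

lemma dist_le_infdist_sum:
  assumes "A \<noteq> {}" "\<And>p q. p \<in> A \<Longrightarrow> q \<in> A \<Longrightarrow> d < c + dist x p + dist y q"
  shows "d \<le> c + infdist x A + infdist y A"
proof -
  have "d - c - infdist x A \<le> dist y q" if "q \<in> A" for q
  proof -
    have "d - c - dist y q \<le> infdist x A"
      using assms that by (intro le_infdist) (auto simp: less_imp_le algebra_simps)
    then show ?thesis by linarith
  qed
  then have "d - c - infdist x A \<le> infdist y A" by (rule le_infdist[OF assms(1)])
  then show ?thesis by linarith
qed

lemma RBP_geodesic_near_piece:
  fixes Xp :: "'i \<Rightarrow> 'a::metric_space set"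
  assumes gs: "geodesic_space TYPE('a)" and R: "RBP I Xp M" and i: "i \<in> I"
    and x: "x \<in> nbhd C (Xp i)" and y: "y \<in> nbhd C (Xp i)" and g: "geodesic \<gamma> x y"
  shows "\<gamma> ` {0..dist x y} \<subseteq> nbhd (2 * M + 2 * C) (Xp i)"
proof
  fix z assume "z \<in> \<gamma> ` {0..dist x y}"
  then obtain t where t: "t \<in> {0..dist x y}" and z: "z = \<gamma> t" by blast
  have ne: "Xp i \<noteq> {}" and near: "infdist x (Xp i) \<le> C" "infdist y (Xp i) \<le> C"
    using x y unfolding nbhd_def by auto
  have "M > 0" and cover: "UNIV = (\<Union>i\<in>I. Xp i)" using R unfolding RBP_def by auto
  obtain j where j: "j \<in> I" "z \<in> Xp j" using cover by blast
  have "infdist z (Xp i) \<le> 2 * M + 2 * C"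
  proof (cases "j = i")
    case True
    then show ?thesis using j near infdist_nonneg[of x "Xp i"] \<open>M > 0\<close> by simp
  next
    case False
    then obtain w where w: "w \<in> Xp i" "bottleneck w M (Xp i) (Xp j)"
      using RBP_bottleneck[OF R i j(1)] by metis
    have "dist z w \<le> 2 * M + infdist x (Xp i) + infdist y (Xp i)"
      using geodesic_through_bottleneck[OF gs g t _ _ _ w(2)] j z
      by (intro dist_le_infdist_sum[OF ne]) auto
    then show ?thesis using infdist_le[OF w(1), of z] near by linarith
  qed
  then show "z \<in> nbhd (2 * M + 2 * C) (Xp i)" using ne unfolding nbhd_def by simp
qed

theorem lemma2p3:
  fixes I :: "'i set" and Xp :: "'i \<Rightarrow> 'a::metric_space set" and M C :: real
    and i :: 'i and x y :: 'a and \<gamma> :: "real \<Rightarrow> 'a"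
  assumes "geodesic_space TYPE('a)"
    and "RBP I Xp M"
    and "C \<ge> 0" and "i \<in> I"
    and "x \<in> nbhd C (Xp i)" and "y \<in> nbhd C (Xp i)"
    and "geodesic \<gamma> x y"
  shows "\<gamma> ` {0..dist x y} \<subseteq> nbhd (2*M + 2 * max M C) (Xp i)
         \<and> (\<forall>k\<in>I. quasi_convex (4*M) (Xp k))"
proof
  show "\<gamma> ` {0..dist x y} \<subseteq> nbhd (2*M + 2 * max M C) (Xp i)"
    using RBP_geodesic_near_piece[OF assms(1,2,4-7)] nbhd_mono[of "2*M + 2*C"] by force
  have "M > 0" using assms(2) unfolding RBP_def by simp
  show "\<forall>k\<in>I. quasi_convex (4*M) (Xp k)"
    unfolding quasi_convex_def
  proof (intro ballI allI impI)
    fix k a b g assume "k \<in> I" "a \<in> Xp k" "b \<in> Xp k" "geodesic g a b"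
    moreover have "a \<in> nbhd 0 (Xp k)" "b \<in> nbhd 0 (Xp k)"
      using \<open>a \<in> Xp k\<close> \<open>b \<in> Xp k\<close> unfolding nbhd_def by auto
    ultimately have "g ` {0..dist a b} \<subseteq> nbhd (2 * M) (Xp k)"
      using RBP_geodesic_near_piece[OF assms(1,2)] by fastforce
    then show "g ` {0..dist a b} \<subseteq> nbhd (4*M) (Xp k)"
      using nbhd_mono[of "2 * M" "4 * M"] \<open>M > 0\<close> by auto
  qed
qed

end
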